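(* Consider the decremental maintenance procedure described in the context, with parameters satisfying $\ell=\Theta(\log n)$, $p=O(1/\log n)$ and $p\delta=\Omega(c)$. Then: - after initialization, the graph $H_\ell\cup D$ has $O(mp\log n+n\delta\log n)$ edges; - over any sequence of edge deletions issued to $G$, the graph $H_\ell\cup D$ undergoes $O(n\delta\log n)$ edge insertions in total.
   Context: Let $G=(V,E)$ be an undirected graph (parallel edges allowed, no self-loops) with $n$ vertices and $m$ edges $E=\{e_1,\dots,e_m\}$, subject to edge deletions. Fix integers $c\ge1$, $\delta>c$, $\ell\ge1$ and $p\in(0,1)$, and let $s=\lceil pm\rceil$. For $C\subseteq V$, $\partial_F(C)$ is the set of edges of $F$ with exactly one endpoint in $C$. **Initialization.** 1. Maintain graphs $G_0,\dots,G_\ell$, $H_0,\dots,H_\ell$ and $D$ on vertex set $V$. 2. Set all $G_i:=G$ and $D:=(V,\emptyset)$, and $H_0:=(V,\emptyset)$. 3. For $i=1,\dots,\ell$, choose a pairwise independent random function $r_i:\{1,\dots,s\}\to\{1,\dots,m\}$, with the $r_i$ mutually independent. Set $H_i:=H_{i-1}\cup(V,\{e_{r_i(1)},\dots,e_{r_i(s)}\})$. 4. Run CleanUp$(\emptyset)$. **Deletion of $e$.** Delete $e$ from $G$ and from $D$, then run CleanUp$(\{e\})$. **CleanUp$(A)$.** For $j=0,1,\dots,\ell$ in order: 1. Delete the edges of $A$ from $G_j$ and $H_j$. 2. While some edge of $H_j$ lies in a cut of $H_j$ of size $<c$, delete that edge from $H_j$. 3. While some connected component $C$ of $H_j$ has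 $S:=\partial_{G_j}(C)$ with $0<|S|<\delta$, add the edges of $S$ to $A$ and to $D$, and delete $S$ from $G_j$. The maintained certificate is $H_\ell\cup D$. *)

theory Defs
  imports Complex_Main
begin

text \<open>Multigraphs on a vertex set V (of naturals): edges are the indices 1..m,
  with endpoints given by ends. A graph on V is represented by its set of edge indices.\<close>

definition edges_ok :: "nat set \<Rightarrow> (nat \<Rightarrow> nat \<times> nat) \<Rightarrow> nat \<Rightarrow> bool" where
  "edges_ok V ends m \<longleftrightarrow> (\<forall>e\<in>{1..m}. fst (ends e) \<in> V \<and> snd (ends e) \<in> V \<and> fst (ends e) \<noteq> snd (ends e))"

definition bd :: "(nat \<Rightarrow> nat \<times> nat) \<Rightarrow> nat set \<Rightarrow> nat set \<Rightarrow> nat set" where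
  "bd ends F C = {e\<in>F. (fst (ends e) \<in> C) \<noteq> (snd (ends e) \<in> C)}"

definition adj :: "(nat \<Rightarrow> nat \<times> nat) \<Rightarrow> nat set \<Rightarrow> (nat \<times> nat) set" where
  "adj ends F = {(u,v). \<exists>e\<in>F. ends e = (u,v) \<or> ends e = (v,u)}"

definition comps :: "nat set \<Rightarrow> (nat \<Rightarrow> nat \<times> nat) \<Rightarrow> nat set \<Rightarrow> nat set set" where
  "comps V ends F = {{y\<in>V. (x,y) \<in> (adj ends F)\<^sup>*} | x. x \<in> V}"

definition small_cut_edge :: "nat set \<Rightarrow> (nat \<Rightarrow> nat \<times> nat) \<Rightarrow> nat \<Rightarrow> nat set \<Rightarrow> nat \<Rightarrow> bool" where
  "small_cut_edge V ends c H e \<longleftrightarrow> (\<exists>C. C \<subseteq> V \<and> e \<in> bd ends H C \<and> card (bd ends H C) < c)"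

definition prune_rel :: "nat set \<Rightarrow> (nat \<Rightarrow> nat \<times> nat) \<Rightarrow> nat \<Rightarrow> (nat set \<times> nat set) set" where
  "prune_rel V ends c = {(H, H - {e}) | H e. e \<in> H \<and> small_cut_edge V ends c H e}"

text \<open>CleanUp step 3: one separation step on (G_j, A, D), for fixed H_j\<close>
definition sep_rel :: "nat set \<Rightarrow> (nat \<Rightarrow> nat \<times> nat) \<Rightarrow> nat \<Rightarrow> nat set
    \<Rightarrow> ((nat set \<times> nat set \<times> nat set) \<times> (nat set \<times> nat set \<times> nat set)) set" where
  "sep_rel V ends \<delta> H = {((G, A, D), (G - S, A \<union> S, D \<union> S)) | G A D S.
      (\<exists>C\<in>comps V ends H. S = bd ends G C \<and> 0 < card S \<and> card S < \<delta>)}"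

definition sep_done :: "nat set \<Rightarrow> (nat \<Rightarrow> nat \<times> nat) \<Rightarrow> nat \<Rightarrow> nat set \<Rightarrow> nat set \<Rightarrow> bool" where
  "sep_done V ends \<delta> H G \<longleftrightarrow>
     (\<forall>C\<in>comps V ends H. \<not> (0 < card (bd ends G C) \<and> card (bd ends G C) < \<delta>))"

text \<open>Cleanup state: (G_j family, H_j family, D, A)\<close>
type_synonym cstate = "(nat \<Rightarrow> nat set) \<times> (nat \<Rightarrow> nat set) \<times> nat set \<times> nat set"

text \<open>Processing of level j of CleanUp (steps 1--3), all nondeterministic choices allowed\<close>
definition level_step :: "nat set \<Rightarrow> (nat \<Rightarrow> nat \<times> nat) \<Rightarrow> nat \<Rightarrow> nat \<Rightarrow> nat \<Rightarrow> cstate \<Rightarrow> cstate \<Rightarrow> bool" where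
  "level_step V ends c \<delta> j st st' \<longleftrightarrow> (case st of (Gs, Hs, D, A) \<Rightarrow>
     (\<exists>H2 G3 A3 D3.
        (Hs j - A, H2) \<in> (prune_rel V ends c)\<^sup>* \<and>
        (\<forall>e\<in>H2. \<not> small_cut_edge V ends c H2 e) \<and>
        ((Gs j - A, A, D), (G3, A3, D3)) \<in> (sep_rel V ends \<delta> H2)\<^sup>* \<and>
        sep_done V ends \<delta> H2 G3 \<and>
        st' = (Gs(j := G3), Hs(j := H2), D3, A3)))"

definition cleanup :: "nat set \<Rightarrow> (nat \<Rightarrow> nat \<times> nat) \<Rightarrow> nat \<Rightarrow> nat \<Rightarrow> nat \<Rightarrow> cstate \<Rightarrow> cstate \<Rightarrow> bool" where
  "cleanup V ends c \<delta> l st st' \<longleftrightarrow>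
     (\<exists>f. f 0 = st \<and> (\<forall>j\<le>l. level_step V ends c \<delta> j (f j) (f (Suc j))) \<and> st' = f (Suc l))"

text \<open>Global state: (current G, G_j family, H_j family, D)\<close>
type_synonym gstate = "nat set \<times> (nat \<Rightarrow> nat set) \<times> (nat \<Rightarrow> nat set) \<times> nat set"

definition H_init :: "nat \<Rightarrow> (nat \<Rightarrow> nat \<Rightarrow> nat) \<Rightarrow> nat \<Rightarrow> nat set" where
  "H_init s r i = (\<Union>k\<in>{1..i}. r k ` {1..s})"

definition initialized :: "nat set \<Rightarrow> (nat \<Rightarrow> nat \<times> nat) \<Rightarrow> nat \<Rightarrow> nat \<Rightarrow> nat \<Rightarrow> nat \<Rightarrow> real
    \<Rightarrow> (nat \<Rightarrow> nat \<Rightarrow> nat) \<Rightarrow> gstate \<Rightarrow> bool" where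
  "initialized V ends c \<delta> l m p r st \<longleftrightarrow> (case st of (G, Gs, Hs, D) \<Rightarrow>
     G = {1..m} \<and>
     (\<exists>A'. cleanup V ends c \<delta> l (\<lambda>i. {1..m}, H_init (nat \<lceil>p * real m\<rceil>) r, {}, {}) (Gs, Hs, D, A')))"

definition delete_step :: "nat set \<Rightarrow> (nat \<Rightarrow> nat \<times> nat) \<Rightarrow> nat \<Rightarrow> nat \<Rightarrow> nat \<Rightarrow> nat
    \<Rightarrow> gstate \<Rightarrow> gstate \<Rightarrow> bool" where
  "delete_step V ends c \<delta> l e st st' \<longleftrightarrow> (case st of (G, Gs, Hs, D) \<Rightarrow>
     (case st' of (G', Gs', Hs', D') \<Rightarrow>
        e \<in> G \<and> G' = G - {e} \<and>
        (\<exists>A'. cleanup V ends c \<delta> l (Gs, Hs, D - {e}, {e}) (Gs', Hs', D', A'))))"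

definition cert :: "nat \<Rightarrow> gstate \<Rightarrow> nat set" where
  "cert l st = (case st of (G, Gs, Hs, D) \<Rightarrow> Hs l \<union> D)"

end

theory Submission
  imports Defs "HOL-Library.Disjoint_Sets"
begin

(* Give level j the potential  2n - #components(H_j) - #(components of H_j with no boundary
   edge in G_j).  Deleting edges of G_j only isolates components, and deleting edges of H_j
   splits components, where every isolated component that gets split leaves at least two
   pieces; so the potential never increases.  A separation step removes a boundary S with
   0 < |S| < delta and isolates one more component, so delta times the potential drops by more
   than |S|.  Summed over the l + 1 levels, D receives at most delta (l + 1) 2n edges during
   the whole run, and since the H_j only lose edges, every edge inserted into H_l \<union> D is
   inserted into D.  Initially |H_l| <= l ceil(pm).  Both bounds hold for every outcome of the
   sampling. *)

lemma card_refines: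
  assumes "finite A" and "refines A P Q"
  shows "card Q + card (Q - P) \<le> card P"
proof -
  define fibre where "fibre q = {p \<in> P. p \<subseteq> q}" for q
  have P: "partition_on A P" and Q: "partition_on A Q"
    using assms(2) by (auto simp: refines_def)
  have fin: "finite P" "finite Q"
    using finite_elements[OF assms(1)] P Q by auto
  have P_eq: "P = (\<Union>q\<in>Q. fibre q)"
    using assms(2) by (auto simp: refines_def fibre_def)
  have fibres_disjoint: "fibre q \<inter> fibre q' = {}" if "q \<in> Q" "q' \<in> Q" "q \<noteq> q'" for q q'
  proof -
    have "q \<inter> q' = {}"
      using partition_onD2[OF Q] that by (auto simp: disjoint_def)
    then show ?thesis
      using partition_onD3[OF P] by (auto simp: fibre_def) (metis Int_greatest subset_empty)
  qed
  have card_P: "card P = (\<Sum>q\<in>Q. card (fibre q))"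
    unfolding P_eq using fin fibres_disjoint
    by (intro card_UN_disjoint) (auto simp: fibre_def intro: finite_subset[of _ P])
  have card_fibre: "(if q \<in> P then 1 else 2) \<le> card (fibre q)" if "q \<in> Q" for q
  proof -
    have part: "partition_on q (fibre q)"
      unfolding fibre_def using refines_obtains_subset[OF assms(2) that] .
    have "finite (fibre q)"
      using fin by (auto simp: fibre_def)
    moreover have "fibre q \<noteq> {}"
      using part partition_onD3[OF Q] that by (auto simp: partition_on_def)
    ultimately have "card (fibre q) \<noteq> 0"
      by simp
    moreover have "q \<in> P" if one: "card (fibre q) = 1"
    proof -
      obtain p where "fibre q = {p}"
        using one by (rule card_1_singletonE)
      then show ?thesis
        using part by (auto simp: partition_on_def fibre_def)
    qed
    ultimately show ?thesis
      by (cases "q \<in> P") (simp_all, presburger)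
  qed
  have "card Q + card (Q - P) = (\<Sum>q\<in>Q \<inter> P. 1) + (\<Sum>q\<in>Q - P. 2)"
    using sum.Int_Diff[OF fin(2), of "\<lambda>_. 1::nat" P] by simp
  also have "\<dots> \<le> (\<Sum>q\<in>Q \<inter> P. card (fibre q)) + (\<Sum>q\<in>Q - P. card (fibre q))"
    by (intro add_mono sum_mono) (use card_fibre in fastforce)+
  also have "\<dots> = card P"
    unfolding card_P by (rule sum.Int_Diff[OF fin(2), symmetric])
  finally show ?thesis .
qed

definition paid_growth :: "('s \<Rightarrow> 'a set) \<Rightarrow> ('s \<Rightarrow> nat) \<Rightarrow> 's \<Rightarrow> 's \<Rightarrow> bool" where
  "paid_growth D \<Phi> x y \<longleftrightarrow> finite (D y - D x) \<and> card (D y - D x) + \<Phi> y \<le> \<Phi> x"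

lemma paid_growth_refl: "paid_growth D \<Phi> x x"
  by (simp add: paid_growth_def)

lemma paid_growth_trans:
  assumes xy: "paid_growth D \<Phi> x y" and yz: "paid_growth D \<Phi> y z"
  shows "paid_growth D \<Phi> x z"
proof -
  have sub: "D z - D x \<subseteq> (D z - D y) \<union> (D y - D x)"
    by blast
  have fin: "finite ((D z - D y) \<union> (D y - D x))"
    using xy yz by (simp add: paid_growth_def)
  have "card (D z - D x) \<le> card ((D z - D y) \<union> (D y - D x))"
    using fin sub by (rule card_mono)
  also have "\<dots> \<le> card (D z - D y) + card (D y - D x)"
    by (rule card_Un_le)
  finally show ?thesis
    using xy yz finite_subset[OF sub fin] by (simp add: paid_growth_def)
qed

lemma paid_growth_rtrancl:
  assumes "(x, y) \<in> R\<^sup>*" and "\<And>u v. (u, v) \<in> R \<Longrightarrow> paid_growth D \<Phi> u v"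
  shows "paid_growth D \<Phi> x y"
  using assms(1) by induction (auto intro: paid_growth_refl paid_growth_trans assms(2))

lemma telescoping_sum_le:
  fixes c \<phi> :: "nat \<Rightarrow> nat"
  assumes "\<And>k. k < n \<Longrightarrow> c k + \<phi> (Suc k) \<le> \<phi> k"
  shows "(\<Sum>k<n. c k) + \<phi> n \<le> \<phi> 0"
  using assms by (induction n) fastforce+

definition comp_of :: "nat set \<Rightarrow> (nat \<Rightarrow> nat \<times> nat) \<Rightarrow> nat set \<Rightarrow> nat \<Rightarrow> nat set" where
  "comp_of V ends F x = {y \<in> V. (x, y) \<in> (adj ends F)\<^sup>*}"

lemma comps_eq_image: "comps V ends F = comp_of V ends F ` V"
  by (auto simp: comps_def comp_of_def)

lemma comp_of_subset: "comp_of V ends F x \<subseteq> V"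
  by (auto simp: comp_of_def)

lemma comp_of_self: "x \<in> V \<Longrightarrow> x \<in> comp_of V ends F x"
  by (simp add: comp_of_def)

lemma comp_of_eq:
  assumes "y \<in> comp_of V ends F x"
  shows "comp_of V ends F y = comp_of V ends F x"
proof -
  have "sym ((adj ends F)\<^sup>*)"
    by (rule sym_rtrancl) (auto simp: sym_def adj_def)
  moreover have "(x, y) \<in> (adj ends F)\<^sup>*"
    using assms by (simp add: comp_of_def)
  ultimately show ?thesis
    unfolding comp_of_def by (blast dest: symD intro: rtrancl_trans)
qed

lemma comp_of_mono: "F' \<subseteq> F \<Longrightarrow> comp_of V ends F' x \<subseteq> comp_of V ends F x"
proof -
  assume "F' \<subseteq> F"
  then have "adj ends F' \<subseteq> adj ends F"
    by (auto simp: adj_def)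
  then show ?thesis
    unfolding comp_of_def using rtrancl_mono by blast
qed

lemma partition_on_comps: "partition_on V (comps V ends F)"
proof (rule partition_onI)
  show "\<Union> (comps V ends F) = V"
    using comp_of_subset comp_of_self by (fastforce simp: comps_eq_image)
  show "{} \<notin> comps V ends F"
    using comp_of_self by (fastforce simp: comps_eq_image)
  fix C C' assume "C \<in> comps V ends F" "C' \<in> comps V ends F" "C \<noteq> C'"
  then obtain x x' where C: "C = comp_of V ends F x" "C' = comp_of V ends F x'"
    by (auto simp: comps_eq_image)
  show "disjnt C C'"
  proof (unfold disjnt_iff, intro allI notI, elim conjE)
    fix z assume "z \<in> C" "z \<in> C'"
    then have "C = C'"
      unfolding C using comp_of_eq by metis
    with \<open>C \<noteq> C'\<close> show False ..
  qed
qed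

lemma refines_comps:
  assumes "F' \<subseteq> F"
  shows "refines V (comps V ends F') (comps V ends F)"
  unfolding refines_def
proof (intro conjI partition_on_comps ballI)
  fix C' assume "C' \<in> comps V ends F'"
  then obtain x where "x \<in> V" "C' = comp_of V ends F' x"
    by (auto simp: comps_eq_image)
  then show "\<exists>C \<in> comps V ends F. C' \<subseteq> C"
    using comp_of_mono[OF assms] unfolding comps_eq_image by blast
qed

definition isolated_comps :: "nat set \<Rightarrow> (nat \<Rightarrow> nat \<times> nat) \<Rightarrow> nat set \<Rightarrow> nat set \<Rightarrow> nat set set" where
  "isolated_comps V ends H G = {C \<in> comps V ends H. bd ends G C = {}}"

definition potential :: "nat set \<Rightarrow> (nat \<Rightarrow> nat \<times> nat) \<Rightarrow> nat set \<Rightarrow> nat set \<Rightarrow> nat" where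
  "potential V ends H G = 2 * card V - (card (comps V ends H) + card (isolated_comps V ends H G))"

lemma finite_comps: "finite V \<Longrightarrow> finite (comps V ends F)"
  by (simp add: comps_eq_image)

lemma card_comps_le: "finite V \<Longrightarrow> card (comps V ends F) \<le> card V"
  by (simp add: comps_eq_image card_image_le)

lemma finite_isolated_comps: "finite V \<Longrightarrow> finite (isolated_comps V ends H G)"
  by (simp add: isolated_comps_def finite_comps)

lemma card_isolated_comps_le: "finite V \<Longrightarrow> card (isolated_comps V ends H G) \<le> card (comps V ends H)"
  unfolding isolated_comps_def by (intro card_mono finite_comps) auto

lemma potential_mono_G:
  assumes "finite V" and "G' \<subseteq> G"
  shows "potential V ends H G' \<le> potential V ends H G"
proof -
  have "isolated_comps V ends H G \<subseteq> isolated_comps V ends H G'"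
    using assms(2) by (auto simp: isolated_comps_def bd_def)
  then have "card (isolated_comps V ends H G) \<le> card (isolated_comps V ends H G')"
    by (intro card_mono finite_isolated_comps assms(1))
  then show ?thesis
    unfolding potential_def by (intro diff_le_mono2) simp
qed

lemma potential_mono_H:
  assumes "finite V" and "H' \<subseteq> H"
  shows "potential V ends H' G \<le> potential V ends H G"
proof -
  let ?C = "comps V ends H" and ?C' = "comps V ends H'"
  let ?I = "isolated_comps V ends H G" and ?I' = "isolated_comps V ends H' G"
  have "card ?I \<le> card (?I' \<union> (?C - ?C'))"
    using assms(1) by (intro card_mono finite_UnI finite_Diff finite_isolated_comps finite_comps)
      (auto simp: isolated_comps_def)
  also have "\<dots> \<le> card ?I' + card (?C - ?C')"
    by (rule card_Un_le)
  finally have "card ?C + card ?I \<le> card ?C' + card ?I'"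
    using card_refines[OF assms(1) refines_comps[OF assms(2), where ends = ends]] by linarith
  then show ?thesis
    unfolding potential_def by (rule diff_le_mono2)
qed

lemma potential_separate:
  assumes "finite V" and "C \<in> comps V ends H" and "bd ends G C \<noteq> {}"
  shows "potential V ends H (G - bd ends G C) < potential V ends H G"
proof -
  let ?I = "isolated_comps V ends H G" and ?I' = "isolated_comps V ends H (G - bd ends G C)"
  have "insert C ?I \<subseteq> ?I'"
    using assms(2) by (auto simp: isolated_comps_def bd_def)
  then have "card (insert C ?I) \<le> card ?I'"
    by (intro card_mono finite_isolated_comps assms(1))
  moreover have "C \<notin> ?I"
    using assms(3) by (simp add: isolated_comps_def)
  ultimately have "Suc (card ?I) \<le> card ?I'"
    using finite_isolated_comps[OF assms(1)] by simp
  moreover have "card (comps V ends H) + card ?I' \<le> 2 * card V"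
    using card_isolated_comps_le[OF assms(1), of ends H "G - bd ends G C"]
      card_comps_le[OF assms(1), of ends H] by linarith
  ultimately show ?thesis
    unfolding potential_def by linarith
qed

lemma paid_growth_sep_rel:
  assumes "finite V" and "(u, v) \<in> sep_rel V ends \<delta> H"
  shows "paid_growth (\<lambda>(G, A, D). D) (\<lambda>(G, A, D). \<delta> * potential V ends H G) u v"
proof -
  obtain G A D C where uv: "u = (G, A, D)" "v = (G - bd ends G C, A \<union> bd ends G C, D \<union> bd ends G C)"
    and C: "C \<in> comps V ends H" "0 < card (bd ends G C)" "card (bd ends G C) < \<delta>"
    using assms(2) by (auto simp: sep_rel_def)
  let ?S = "bd ends G C"
  have "potential V ends H (G - ?S) < potential V ends H G"
    using C(2) by (intro potential_separate[OF assms(1) C(1)]) auto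
  then have "\<delta> + \<delta> * potential V ends H (G - ?S) \<le> \<delta> * potential V ends H G"
    by (metis Suc_leI mult_Suc_right mult_le_mono2)
  moreover have "finite ?S"
    using C(2) card_ge_0_finite by blast
  moreover have "D \<union> ?S - D \<subseteq> ?S"
    by blast
  ultimately show ?thesis
    using uv C(3) card_mono[of ?S "D \<union> ?S - D"] finite_subset[of "D \<union> ?S - D" ?S]
    by (simp add: paid_growth_def)
qed

lemma prune_rel_rtrancl_subset: "(H, H') \<in> (prune_rel V ends c)\<^sup>* \<Longrightarrow> H' \<subseteq> H"
  by (induction rule: rtrancl_induct) (auto simp: prune_rel_def)

definition levels_potential :: "nat set \<Rightarrow> (nat \<Rightarrow> nat \<times> nat) \<Rightarrow> nat \<Rightarrow> (nat \<Rightarrow> nat set) \<Rightarrow> (nat \<Rightarrow> nat set) \<Rightarrow> nat" where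
  "levels_potential V ends l Gs Hs = (\<Sum>j\<le>l. potential V ends (Hs j) (Gs j))"

lemma levels_potential_le: "levels_potential V ends l Gs Hs \<le> (l + 1) * (2 * card V)"
proof -
  have "levels_potential V ends l Gs Hs \<le> (\<Sum>j\<le>l. 2 * card V)"
    unfolding levels_potential_def by (intro sum_mono) (simp add: potential_def)
  then show ?thesis
    by simp
qed

lemma levels_potential_update:
  assumes "j \<le> l"
  shows "levels_potential V ends l (Gs(j := G)) (Hs(j := H)) + potential V ends (Hs j) (Gs j)
    = levels_potential V ends l Gs Hs + potential V ends H G"
proof -
  have j: "j \<in> {..l}"
    using assms by simp
  have "(\<Sum>i\<in>{..l} - {j}. potential V ends ((Hs(j := H)) i) ((Gs(j := G)) i))
      = (\<Sum>i\<in>{..l} - {j}. potential V ends (Hs i) (Gs i))"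
    by (intro sum.cong) auto
  then show ?thesis
    unfolding levels_potential_def sum.remove[OF finite_atMost j] by simp
qed

lemma level_step_paid_growth:
  assumes "finite V" and "j \<le> l" and "level_step V ends c \<delta> j st st'"
  shows "paid_growth (\<lambda>(Gs, Hs, D, A). D) (\<lambda>(Gs, Hs, D, A). \<delta> * levels_potential V ends l Gs Hs) st st'"
proof -
  obtain Gs Hs D A where st: "st = (Gs, Hs, D, A)"
    by (cases st)
  obtain H2 G3 A3 D3 where prune: "(Hs j - A, H2) \<in> (prune_rel V ends c)\<^sup>*"
    and sep: "((Gs j - A, A, D), (G3, A3, D3)) \<in> (sep_rel V ends \<delta> H2)\<^sup>*"
    and st': "st' = (Gs(j := G3), Hs(j := H2), D3, A3)"
    using assms(3) unfolding st level_step_def by auto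
  have "paid_growth (\<lambda>(G, A, D). D) (\<lambda>(G, A, D). \<delta> * potential V ends H2 G) (Gs j - A, A, D) (G3, A3, D3)"
    using sep by (rule paid_growth_rtrancl) (rule paid_growth_sep_rel[OF assms(1)])
  then have growth: "finite (D3 - D)"
    "card (D3 - D) + \<delta> * potential V ends H2 G3 \<le> \<delta> * potential V ends H2 (Gs j - A)"
    by (simp_all add: paid_growth_def)
  have "potential V ends H2 (Gs j - A) \<le> potential V ends H2 (Gs j)"
    using assms(1) by (rule potential_mono_G) auto
  also have "\<dots> \<le> potential V ends (Hs j) (Gs j)"
    using assms(1) by (rule potential_mono_H) (use prune_rel_rtrancl_subset[OF prune] in blast)
  finally have "\<delta> * potential V ends H2 (Gs j - A) \<le> \<delta> * potential V ends (Hs j) (Gs j)"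
    by (rule mult_le_mono2)
  moreover have "\<delta> * levels_potential V ends l (Gs(j := G3)) (Hs(j := H2)) + \<delta> * potential V ends (Hs j) (Gs j)
      = \<delta> * levels_potential V ends l Gs Hs + \<delta> * potential V ends H2 G3"
    using levels_potential_update[OF assms(2)] by (metis add_mult_distrib2)
  ultimately have "card (D3 - D) + \<delta> * levels_potential V ends l (Gs(j := G3)) (Hs(j := H2))
      \<le> \<delta> * levels_potential V ends l Gs Hs"
    using growth(2) by linarith
  then show ?thesis
    using growth(1) unfolding st st' paid_growth_def by simp
qed

lemma level_step_H_le:
  assumes "level_step V ends c \<delta> j st st'"
  shows "fst (snd st') \<le> fst (snd st)"
proof -
  obtain Gs Hs D A where st: "st = (Gs, Hs, D, A)"
    by (cases st)
  obtain H2 where prune: "(Hs j - A, H2) \<in> (prune_rel V ends c)\<^sup>*" and "fst (snd st') = Hs(j := H2)"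
    using assms unfolding st level_step_def by auto
  moreover have "H2 \<subseteq> Hs j - A"
    using prune by (rule prune_rel_rtrancl_subset)
  ultimately show ?thesis
    by (auto simp: st le_fun_def)
qed

lemma cleanup_rtrancl:
  assumes "cleanup V ends c \<delta> l st st'"
  shows "(st, st') \<in> {(u, v). \<exists>j\<le>l. level_step V ends c \<delta> j u v}\<^sup>*"
proof (rule relpow_imp_rtrancl)
  obtain f where "f 0 = st" "\<forall>j\<le>l. level_step V ends c \<delta> j (f j) (f (Suc j))" "st' = f (Suc l)"
    using assms unfolding cleanup_def by blast
  then show "(st, st') \<in> {(u, v). \<exists>j\<le>l. level_step V ends c \<delta> j u v} ^^ Suc l"
    unfolding relpow_fun_conv by (intro exI[of _ f]) (auto simp: less_Suc_eq_le)
qed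

lemma cleanup_paid_growth:
  assumes "finite V" and "cleanup V ends c \<delta> l st st'"
  shows "paid_growth (\<lambda>(Gs, Hs, D, A). D) (\<lambda>(Gs, Hs, D, A). \<delta> * levels_potential V ends l Gs Hs) st st'"
  using cleanup_rtrancl[OF assms(2)] by (rule paid_growth_rtrancl) (auto intro: level_step_paid_growth[OF assms(1)])

lemma cleanup_H_le:
  assumes "cleanup V ends c \<delta> l (Gs, Hs, D, A) (Gs', Hs', D', A')"
  shows "Hs' \<le> Hs"
proof -
  have "fst (snd st') \<le> fst (snd st)"
    if "(st, st') \<in> {(u, v). \<exists>j\<le>l. level_step V ends c \<delta> j u v}\<^sup>*" for st st' :: cstate
    using that
  proof induction
    case (step u v)
    then obtain j where "level_step V ends c \<delta> j u v"
      by blast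
    with step.IH show ?case
      using level_step_H_le order_trans by blast
  qed simp
  from this[OF cleanup_rtrancl[OF assms]] show ?thesis
    by simp
qed

definition state_potential :: "nat set \<Rightarrow> (nat \<Rightarrow> nat \<times> nat) \<Rightarrow> nat \<Rightarrow> gstate \<Rightarrow> nat" where
  "state_potential V ends l st = (case st of (G, Gs, Hs, D) \<Rightarrow> levels_potential V ends l Gs Hs)"

lemma delete_step_cert_growth:
  assumes "finite V" and "delete_step V ends c \<delta> l e st st'"
  shows "card (cert l st' - cert l st) + \<delta> * state_potential V ends l st' \<le> \<delta> * state_potential V ends l st"
proof -
  obtain G Gs Hs D where st: "st = (G, Gs, Hs, D)"
    by (cases st)
  obtain G' Gs' Hs' D' where st': "st' = (G', Gs', Hs', D')"
    by (cases st')
  obtain A' where cu: "cleanup V ends c \<delta> l (Gs, Hs, D - {e}, {e}) (Gs', Hs', D', A')"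
    using assms(2) by (auto simp: delete_step_def st st')
  have "Hs' l \<subseteq> Hs l"
    using cleanup_H_le[OF cu] by (simp add: le_fun_def)
  then have "cert l st' - cert l st \<subseteq> D' - (D - {e})"
    by (auto simp: cert_def st st')
  moreover have growth: "finite (D' - (D - {e}))"
    "card (D' - (D - {e})) + \<delta> * levels_potential V ends l Gs' Hs' \<le> \<delta> * levels_potential V ends l Gs Hs"
    using cleanup_paid_growth[OF assms(1) cu] by (simp_all add: paid_growth_def)
  ultimately have "card (cert l st' - cert l st) \<le> card (D' - (D - {e}))"
    by (intro card_mono)
  then show ?thesis
    using growth(2) by (simp add: state_potential_def st st')
qed

lemma cert_insertions_le:
  assumes "finite V"
    and steps: "\<forall>k<length es. delete_step V ends c \<delta> l (es ! k) ((st0 # sts) ! k) (sts ! k)"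
  shows "(\<Sum>k<length es. card (cert l (sts ! k) - cert l ((st0 # sts) ! k))) \<le> \<delta> * ((l + 1) * (2 * card V))"
proof -
  let ?\<phi> = "\<lambda>k. \<delta> * state_potential V ends l ((st0 # sts) ! k)"
  have "card (cert l (sts ! k) - cert l ((st0 # sts) ! k)) + ?\<phi> (Suc k) \<le> ?\<phi> k" if "k < length es" for k
    using delete_step_cert_growth[OF assms(1) steps[rule_format, OF that]] by simp
  then have "(\<Sum>k<length es. card (cert l (sts ! k) - cert l ((st0 # sts) ! k))) + ?\<phi> (length es) \<le> ?\<phi> 0"
    by (rule telescoping_sum_le)
  moreover have "state_potential V ends l st0 \<le> (l + 1) * (2 * card V)"
    using levels_potential_le by (simp add: state_potential_def split: prod.split)
  then have "?\<phi> 0 \<le> \<delta> * ((l + 1) * (2 * card V))"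
    by (simp add: mult_le_mono2)
  ultimately show ?thesis
    by linarith
qed

lemma card_H_init_le: "card (H_init s r l) \<le> l * s"
proof -
  have "card (H_init s r l) \<le> (\<Sum>k\<in>{1..l}. card (r k ` {1..s}))"
    unfolding H_init_def by (rule card_UN_le) simp
  also have "\<dots> \<le> (\<Sum>k\<in>{1..l}. s)"
  proof (rule sum_mono)
    fix k
    show "card (r k ` {1..s}) \<le> s"
      using card_image_le[of "{1..s}" "r k"] by simp
  qed
  finally show ?thesis
    by simp
qed

lemma cert_init_card_le:
  assumes "finite V" and "initialized V ends c \<delta> l m p r st0"
  shows "card (cert l st0) \<le> l * nat \<lceil>p * real m\<rceil> + \<delta> * ((l + 1) * (2 * card V))"
proof -
  obtain G Gs Hs D where st0: "st0 = (G, Gs, Hs, D)"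
    by (cases st0)
  define s where "s = nat \<lceil>p * real m\<rceil>"
  obtain A' where cu: "cleanup V ends c \<delta> l (\<lambda>i. {1..m}, H_init s r, {}, {}) (Gs, Hs, D, A')"
    using assms(2) by (auto simp: initialized_def st0 s_def)
  have "Hs l \<subseteq> H_init s r l"
    using cleanup_H_le[OF cu] by (simp add: le_fun_def)
  then have "card (Hs l) \<le> card (H_init s r l)"
    by (rule card_mono[rotated]) (simp add: H_init_def)
  also have "\<dots> \<le> l * s"
    by (rule card_H_init_le)
  finally have H: "card (Hs l) \<le> l * s" .
  have "card D \<le> \<delta> * levels_potential V ends l (\<lambda>i. {1..m}) (H_init s r)"
    using cleanup_paid_growth[OF assms(1) cu] by (simp add: paid_growth_def)
  also have "\<dots> \<le> \<delta> * ((l + 1) * (2 * card V))"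
    by (intro mult_le_mono2 levels_potential_le)
  finally have "card D \<le> \<delta> * ((l + 1) * (2 * card V))" .
  then show ?thesis
    using H card_Un_le[of "Hs l" D] unfolding s_def cert_def st0 by simp
qed

lemma levels_bound_real:
  fixes a L :: real
  assumes "1 \<le> l" and "real l \<le> a * L"
  shows "real (\<delta> * ((l + 1) * (2 * n))) \<le> 4 * a * (real n * real \<delta> * L)"
proof -
  have "real (\<delta> * ((l + 1) * (2 * n))) = 2 * (real n * real \<delta>) * (real l + 1)"
    by (simp add: algebra_simps)
  also have "\<dots> \<le> 2 * (real n * real \<delta>) * (2 * (a * L))"
    using assms by (intro mult_left_mono) auto
  finally show ?thesis
    by (simp add: algebra_simps)
qed

lemma samples_bound_real:
  fixes a L p :: real
  assumes "real l \<le> a * L" and "0 \<le> p"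
  shows "real (l * nat \<lceil>p * real m\<rceil>) \<le> a * (real m * p * L) + a * L"
proof -
  have "real (nat \<lceil>p * real m\<rceil>) = real_of_int \<lceil>p * real m\<rceil>"
    using assms(2) by simp
  then have "real (nat \<lceil>p * real m\<rceil>) \<le> p * real m + 1"
    by linarith
  then have "real (l * nat \<lceil>p * real m\<rceil>) \<le> (a * L) * (p * real m + 1)"
    using assms(1) by (simp add: mult_mono)
  then show ?thesis
    by (simp add: algebra_simps)
qed

lemma log_regime_bounds:
  fixes a :: real
  assumes "1 \<le> l" and "real l \<le> a * ln (real n)" and "1 \<le> \<delta>"
  shows "0 < a" and "0 \<le> ln (real n)" and "a * ln (real n) \<le> a * (real n * real \<delta> * ln (real n))"
proof -
  have aL: "1 \<le> a * ln (real n)"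
    using assms(1,2) by simp
  then have "n \<noteq> 0"
    by (cases n) auto
  then show L_nonneg: "0 \<le> ln (real n)"
    by simp
  with aL show a_pos: "0 < a"
    by (smt (verit) mult_nonpos_nonneg)
  have "1 \<le> real n * real \<delta>"
    using \<open>n \<noteq> 0\<close> assms(3) mult_mono[of 1 "real n" 1 "real \<delta>"] by simp
  then have "ln (real n) \<le> real n * real \<delta> * ln (real n)"
    using L_nonneg mult_right_mono[of 1 "real n * real \<delta>"] by simp
  with a_pos show "a * ln (real n) \<le> a * (real n * real \<delta> * ln (real n))"
    by simp
qed

theorem card_cert_init_bound:
  fixes a p :: real
  assumes "finite V" and "1 \<le> l" and "1 \<le> \<delta>" and "0 \<le> p"
    and l_le: "real l \<le> a * ln (real (card V))"
    and "initialized V ends c \<delta> l m p r st0"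
  shows "real (card (cert l st0))
      \<le> 5 * a * (real m * p * ln (real (card V)) + real (card V) * real \<delta> * ln (real (card V)))"
proof -
  let ?n = "card V" and ?L = "ln (real (card V))"
  note log = log_regime_bounds[OF assms(2) l_le assms(3)]
  have "real (card (cert l st0)) \<le> real (l * nat \<lceil>p * real m\<rceil>) + real (\<delta> * ((l + 1) * (2 * ?n)))"
    using cert_init_card_le[OF assms(1,6)] by linarith
  also have "\<dots> \<le> a * (real m * p * ?L) + a * ?L + 4 * a * (real ?n * real \<delta> * ?L)"
    using samples_bound_real[OF l_le assms(4), of m] levels_bound_real[OF assms(2) l_le, where \<delta> = \<delta> and n = ?n]
    by linarith
  moreover have "0 \<le> a * (real m * p * ?L)"
    using log(1,2) assms(4) by simp
  ultimately show ?thesis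
    using log(3) by (simp add: algebra_simps)
qed

theorem cert_insertions_bound:
  fixes a :: real
  assumes "finite V" and "1 \<le> l" and "1 \<le> \<delta>"
    and l_le: "real l \<le> a * ln (real (card V))"
    and "\<forall>k<length es. delete_step V ends c \<delta> l (es ! k) ((st0 # sts) ! k) (sts ! k)"
  shows "real (\<Sum>k<length es. card (cert l (sts ! k) - cert l ((st0 # sts) ! k)))
      \<le> 5 * a * (real (card V) * real \<delta> * ln (real (card V)))"
proof -
  let ?Y = "real (card V) * real \<delta> * ln (real (card V))"
  have "real (\<Sum>k<length es. card (cert l (sts ! k) - cert l ((st0 # sts) ! k)))
      \<le> real (\<delta> * ((l + 1) * (2 * card V)))"
    using cert_insertions_le[OF assms(1,5)] by linarith
  also have "\<dots> \<le> 4 * a * ?Y"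
    using assms(2) l_le by (rule levels_bound_real)
  moreover have "0 \<le> a * ?Y"
    using log_regime_bounds[OF assms(2) l_le assms(3)] by simp
  ultimately show ?thesis
    by linarith
qed

theorem lemma7:
  fixes a1 a2 a3 a4 :: real
  assumes "a1 > 0" "a2 > 0" "a3 > 0" "a4 > 0"
  shows "\<exists>(K::real) (N::nat). \<forall>(V::nat set) ends m c \<delta> l (p::real) r st0 es sts.
     (finite V \<and> N \<le> card V \<and> edges_ok V ends m \<and>
      1 \<le> c \<and> c < \<delta> \<and> 1 \<le> l \<and> 0 < p \<and> p < 1 \<and>
      a1 * ln (real (card V)) \<le> real l \<and> real l \<le> a2 * ln (real (card V)) \<and>
      p \<le> a3 / ln (real (card V)) \<and> a4 * real c \<le> p * real \<delta> \<and>
      (\<forall>i\<in>{1..l}. \<forall>k\<in>{1..nat \<lceil>p * real m\<rceil>}. r i k \<in> {1..m}) \<and>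
      initialized V ends c \<delta> l m p r st0 \<and>
      length sts = length es \<and>
      (\<forall>k<length es. delete_step V ends c \<delta> l (es ! k) ((st0 # sts) ! k) (sts ! k)))
     \<longrightarrow>
      real (card (cert l st0))
        \<le> K * (real m * p * ln (real (card V)) + real (card V) * real \<delta> * ln (real (card V))) \<and>
      real (\<Sum>k<length es. card (cert l (sts ! k) - cert l ((st0 # sts) ! k)))
        \<le> K * (real (card V) * real \<delta> * ln (real (card V)))"
  \<comment> \<open>\<open>N = 0\<close> suffices: \<open>1 \<le> l \<le> a2 ln n\<close> already forces \<open>n \<ge> 2\<close>.\<close>
  by (intro exI[of _ "5 * a2"] exI[of _ "0::nat"] allI impI conjI; elim conjE)
    (intro card_cert_init_bound cert_insertions_bound; simp)+

end
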